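(* For every SaSTL formula $\varphi$ (as defined in the context), every spatio-temporal signal $\omega$, every time $t\in\mathbb{T}$ and every location $l\in L$: \[ \rho(\varphi,\omega,t,l)>0 \;\Longrightarrow\; (\omega,t,l)\models\varphi, \qquad \rho(\varphi,\omega,t,l)<0 \;\Longrightarrow\; (\omega,t,l)\not\models\varphi . \]
   Context: Time domain $\mathbb{T}=\mathbb{R}_{\ge 0}$. $L$ is a finite nonempty set of locations. $G=(L,E,\eta)$ is a weighted undirected graph with edge weights $\eta:E\to\mathbb{R}_{\ge0}$; the distance $d(l,l')$ is the minimum, over all paths $\sigma$ between $l$ and $l'$, of $\sum_{e\in\sigma}\eta(e)$ (and $+\infty$ if there is no path). $X=\{x_1,\dots,x_n\}$ is a set of signal variables. A spatio-temporal signal is a function $\omega:\mathbb{T}\times L\to\mathbb{R}^n$; $\pi_{x}(\omega)[t,l]\in\mathbb{R}$ denotes its component for variable $x\in X$ at time $t$ and location $l$. $P$ is a finite set of propositions and $\mathcal{L}:L\to 2^P$ a labeling. Location formulas are $\psi::=\top\mid p\mid\neg\psi\mid\psi\vee\psi$ ($p\in P$), with $\mathcal{L}(l)\models\psi$ defined in the usual propositional way. A spatial domain is $\mathcal{D}=([d_1,d_2],\psi)$ with $0\le d_1\le d_2\le+\infty$. For $l\in L$ let $L^l_{\mathcal{D}}=\{l'\in L: d_1\le d(l,l')\le d_2,\ \mathcal{L}(l')\models\psi\}$. Standing assumption: for every spatial domain $\mathcal{D}$ occurring in the formula and every $l\in L$, $L^l_{\mathcal{D}}\neq\emptyset$. Let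 $\alpha^x_{\mathcal{D}}(\omega,t,l)$ be the (nonempty, finite) multiset $\{\pi_x(\omega)[t,l'] : l'\in L^l_{\mathcal{D}}\}$, and for $\mathrm{op}\in\{\max,\min,\mathrm{sum},\mathrm{avg}\}$ let $\mathrm{op}(\cdot)$ be its maximum, minimum, sum, or arithmetic mean. SaSTL syntax: $\varphi::= x>c \mid \neg\varphi\mid \varphi_1\wedge\varphi_2\mid\varphi_1\vee\varphi_2\mid \varphi_1\,\mathcal{U}_I\,\varphi_2\mid \mathcal{A}^{\mathrm{op}}_{\mathcal{D}}x>c\mid \mathcal{C}^{\mathrm{op}}_{\mathcal{D}}\varphi>c$, where $x\in X$, $c\in\mathbb{R}$, $I\subseteq\mathbb{R}_{>0}$ is a nonempty interval, $\mathrm{op}\in\{\max,\min,\mathrm{sum},\mathrm{avg}\}$. For counting formulas $\mathcal{C}^{\mathrm{op}}_{\mathcal{D}}\varphi>c$ it is assumed that $0\le c<1$ if $\mathrm{op}\in\{\max,\min,\mathrm{avg}\}$ and $0\le c<|L^l_{\mathcal{D}}|$ for all $l\in L$ if $\mathrm{op}=\mathrm{sum}$. Boolean semantics: $(\omega,t,l)\models x>c$ iff $\pi_x(\omega)[t,l]>c$; $\neg,\wedge,\vee$ as usual; $(\omega,t,l)\models\varphi_1\mathcal{U}_I\varphi_2$ iff there is $t'\in(t+I)\cap\mathbb{T}$ with $(\omega,t',l)\models\varphi_2$ and $(\omega,t'',l)\models\varphi_1$ for all $t''\in(t,t')$ (open interval); $(\omega,t,l)\models\mathcal{A}^{\mathrm{op}}_{\mathcal{D}}x>c$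 iff $\mathrm{op}(\alpha^x_{\mathcal{D}}(\omega,t,l))>c$; $(\omega,t,l)\models\mathcal{C}^{\mathrm{op}}_{\mathcal{D}}\varphi>c$ iff $\mathrm{op}(\{g(l'):l'\in L^l_{\mathcal{D}}\})>c$ (multiset), where $g(l')=1$ if $(\omega,t,l')\models\varphi$ and $g(l')=0$ otherwise. Quantitative semantics (robustness, values in $\mathbb{R}\cup\{\pm\infty\}$, with $\inf\emptyset=+\infty$): $\rho(x>c,\omega,t,l)=\pi_x(\omega)[t,l]-c$; $\rho(\neg\varphi)=-\rho(\varphi)$; $\rho(\varphi_1\wedge\varphi_2)=\min\{\rho(\varphi_1),\rho(\varphi_2)\}$; $\rho(\varphi_1\vee\varphi_2)=\max\{\rho(\varphi_1),\rho(\varphi_2)\}$ (all at the same $\omega,t,l$); $\rho(\varphi_1\mathcal{U}_I\varphi_2,\omega,t,l)=\sup_{t'\in(t+I)\cap\mathbb{T}}\min\{\rho(\varphi_2,\omega,t',l),\ \inf_{t''\in(t,t')}\rho(\varphi_1,\omega,t'',l)\}$; $\rho(\mathcal{A}^{\mathrm{sum}}_{\mathcal{D}}x>c,\omega,t,l)=\big(\mathrm{sum}(\alpha^x_{\mathcal{D}}(\omega,t,l))-c\big)/|\alpha^x_{\mathcal{D}}(\omega,t,l)|$ and $\rho(\mathcal{A}^{\mathrm{op}}_{\mathcal{D}}x>c,\omega,t,l)=\mathrm{op}(\alpha^x_{\mathcal{D}}(\omega,t,l))-c$ for $\mathrm{op}\in\{\max,\min,\mathrm{avg}\}$. For counting,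 let $R=\{\rho(\varphi,\omega,t,l'):l'\in L^l_{\mathcal{D}}\}$ (multiset) and let $\delta(k,R)$ denote the $k$-th largest element of $R$ counted with multiplicity; then $\rho(\mathcal{C}^{\max}_{\mathcal{D}}\varphi>c)=\max R$, $\rho(\mathcal{C}^{\min}_{\mathcal{D}}\varphi>c)=\min R$, $\rho(\mathcal{C}^{\mathrm{sum}}_{\mathcal{D}}\varphi>c)=\delta(\lfloor c\rfloor+1,R)$, $\rho(\mathcal{C}^{\mathrm{avg}}_{\mathcal{D}}\varphi>c)=\delta(\lfloor c\,|L^l_{\mathcal{D}}|\rfloor+1,R)$. *)

theory Defs
  imports "HOL-Analysis.Analysis" "HOL-Library.Multiset"
begin

text \<open>An undirected graph is a set
  E of edges, each edge being an unordered pair {a,b} of locations, with weights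
  eta :: 'l set => real.\<close>

definition is_path :: "'l set set \<Rightarrow> 'l \<Rightarrow> 'l \<Rightarrow> 'l list \<Rightarrow> bool" where
  "is_path E a b p \<longleftrightarrow> p \<noteq> [] \<and> hd p = a \<and> last p = b \<and> distinct p \<and>
     (\<forall>(u, v) \<in> set (zip p (tl p)). {u, v} \<in> E)"

definition path_weight :: "('l set \<Rightarrow> real) \<Rightarrow> 'l list \<Rightarrow> real" where
  "path_weight eta p = (\<Sum>(u, v) \<leftarrow> zip p (tl p). eta {u, v})"

text \<open>Distance: minimum path weight, +infinity if there is no path (INF of empty set).\<close>
definition gdist :: "'l set set \<Rightarrow> ('l set \<Rightarrow> real) \<Rightarrow> 'l \<Rightarrow> 'l \<Rightarrow> ereal" where
  "gdist E eta a b = (INF p \<in> {p. is_path E a b p}. ereal (path_weight eta p))"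

datatype 'p lform = LTop | LProp 'p | LNot "'p lform" | LOr "'p lform" "'p lform"

fun lsat :: "'p set \<Rightarrow> 'p lform \<Rightarrow> bool" where
  "lsat P LTop = True"
| "lsat P (LProp p) = (p \<in> P)"
| "lsat P (LNot psi) = (\<not> lsat P psi)"
| "lsat P (LOr psi1 psi2) = (lsat P psi1 \<or> lsat P psi2)"

text \<open>A spatial domain ([d1,d2], psi), with d1, d2 in [0, +infinity].\<close>
type_synonym 'p sdom = "ereal \<times> ereal \<times> 'p lform"

definition nbhd :: "'l set \<Rightarrow> 'l set set \<Rightarrow> ('l set \<Rightarrow> real) \<Rightarrow> ('l \<Rightarrow> 'p set)
    \<Rightarrow> 'p sdom \<Rightarrow> 'l \<Rightarrow> 'l set" where
  "nbhd L E eta Lab D l = (case D of (d1, d2, psi) \<Rightarrow>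
     {l' \<in> L. d1 \<le> gdist E eta l l' \<and> gdist E eta l l' \<le> d2 \<and> lsat (Lab l') psi})"

datatype aop = OpMax | OpMin | OpSum | OpAvg

text \<open>Until I phi1 phi2 stands for phi1 U_I phi2; Agg op D x c for A^op_D x > c;
  Count op D phi c for C^op_D phi > c.  Intervals are sets of reals.\<close>
datatype ('x, 'p) sastl =
    Gt 'x real
  | Neg "('x, 'p) sastl"
  | And "('x, 'p) sastl" "('x, 'p) sastl"
  | Or "('x, 'p) sastl" "('x, 'p) sastl"
  | Until "real set" "('x, 'p) sastl" "('x, 'p) sastl"
  | Agg aop "'p sdom" 'x real
  | Count aop "'p sdom" "('x, 'p) sastl" real

fun mop :: "aop \<Rightarrow> real multiset \<Rightarrow> real" where
  "mop OpMax M = Max (set_mset M)"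
| "mop OpMin M = Min (set_mset M)"
| "mop OpSum M = sum_mset M"
| "mop OpAvg M = sum_mset M / real (size M)"

fun wf :: "'l set \<Rightarrow> 'l set set \<Rightarrow> ('l set \<Rightarrow> real) \<Rightarrow> ('l \<Rightarrow> 'p set)
    \<Rightarrow> ('x, 'p) sastl \<Rightarrow> bool" where
  "wf L E eta Lab (Gt x c) = True"
| "wf L E eta Lab (Neg phi) = wf L E eta Lab phi"
| "wf L E eta Lab (And phi1 phi2) = (wf L E eta Lab phi1 \<and> wf L E eta Lab phi2)"
| "wf L E eta Lab (Or phi1 phi2) = (wf L E eta Lab phi1 \<and> wf L E eta Lab phi2)"
| "wf L E eta Lab (Until I phi1 phi2) =
     (I \<noteq> {} \<and> I \<subseteq> {0<..} \<and> is_interval I \<and> wf L E eta Lab phi1 \<and> wf L E eta Lab phi2)"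
| "wf L E eta Lab (Agg op D x c) =
     (0 \<le> fst D \<and> fst D \<le> fst (snd D) \<and> (\<forall>l\<in>L. nbhd L E eta Lab D l \<noteq> {}))"
| "wf L E eta Lab (Count op D phi c) =
     (0 \<le> fst D \<and> fst D \<le> fst (snd D) \<and> (\<forall>l\<in>L. nbhd L E eta Lab D l \<noteq> {}) \<and>
      (if op = OpSum then 0 \<le> c \<and> (\<forall>l\<in>L. c < real (card (nbhd L E eta Lab D l)))
       else 0 \<le> c \<and> c < 1) \<and>
      wf L E eta Lab phi)"

text \<open>A signal is omega :: real => 'l => 'x => real; omega t l x is pi_x(omega)[t,l].\<close>

definition alpha :: "'l set \<Rightarrow> 'l set set \<Rightarrow> ('l set \<Rightarrow> real) \<Rightarrow> ('l \<Rightarrow> 'p set)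
    \<Rightarrow> 'p sdom \<Rightarrow> 'x \<Rightarrow> (real \<Rightarrow> 'l \<Rightarrow> 'x \<Rightarrow> real) \<Rightarrow> real \<Rightarrow> 'l \<Rightarrow> real multiset" where
  "alpha L E eta Lab D x \<omega> t l = image_mset (\<lambda>l'. \<omega> t l' x) (mset_set (nbhd L E eta Lab D l))"

fun sat :: "'l set \<Rightarrow> 'l set set \<Rightarrow> ('l set \<Rightarrow> real) \<Rightarrow> ('l \<Rightarrow> 'p set)
    \<Rightarrow> ('x, 'p) sastl \<Rightarrow> (real \<Rightarrow> 'l \<Rightarrow> 'x \<Rightarrow> real) \<Rightarrow> real \<Rightarrow> 'l \<Rightarrow> bool" where
  "sat L E eta Lab (Gt x c) \<omega> t l = (\<omega> t l x > c)"
| "sat L E eta Lab (Neg phi) \<omega> t l = (\<not> sat L E eta Lab phi \<omega> t l)"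
| "sat L E eta Lab (And phi1 phi2) \<omega> t l =
     (sat L E eta Lab phi1 \<omega> t l \<and> sat L E eta Lab phi2 \<omega> t l)"
| "sat L E eta Lab (Or phi1 phi2) \<omega> t l =
     (sat L E eta Lab phi1 \<omega> t l \<or> sat L E eta Lab phi2 \<omega> t l)"
| "sat L E eta Lab (Until I phi1 phi2) \<omega> t l =
     (\<exists>t' \<in> ((\<lambda>i. t + i) ` I) \<inter> {0..}. sat L E eta Lab phi2 \<omega> t' l \<and>
        (\<forall>t'' \<in> {t<..<t'}. sat L E eta Lab phi1 \<omega> t'' l))"
| "sat L E eta Lab (Agg op D x c) \<omega> t l = (mop op (alpha L E eta Lab D x \<omega> t l) > c)"
| "sat L E eta Lab (Count op D phi c) \<omega> t l =
     (mop op (image_mset (\<lambda>l'. if sat L E eta Lab phi \<omega> t l' then 1 else 0)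
                (mset_set (nbhd L E eta Lab D l))) > c)"

text \<open>delta k R: the k-th largest element (k >= 1) of R counted with multiplicity.\<close>
definition kth_largest :: "nat \<Rightarrow> ereal multiset \<Rightarrow> ereal" where
  "kth_largest k R = rev (sorted_list_of_multiset R) ! (k - 1)"

fun rho :: "'l set \<Rightarrow> 'l set set \<Rightarrow> ('l set \<Rightarrow> real) \<Rightarrow> ('l \<Rightarrow> 'p set)
    \<Rightarrow> ('x, 'p) sastl \<Rightarrow> (real \<Rightarrow> 'l \<Rightarrow> 'x \<Rightarrow> real) \<Rightarrow> real \<Rightarrow> 'l \<Rightarrow> ereal" where
  "rho L E eta Lab (Gt x c) \<omega> t l = ereal (\<omega> t l x - c)"
| "rho L E eta Lab (Neg phi) \<omega> t l = - rho L E eta Lab phi \<omega> t l"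
| "rho L E eta Lab (And phi1 phi2) \<omega> t l =
     min (rho L E eta Lab phi1 \<omega> t l) (rho L E eta Lab phi2 \<omega> t l)"
| "rho L E eta Lab (Or phi1 phi2) \<omega> t l =
     max (rho L E eta Lab phi1 \<omega> t l) (rho L E eta Lab phi2 \<omega> t l)"
| "rho L E eta Lab (Until I phi1 phi2) \<omega> t l =
     (SUP t' \<in> ((\<lambda>i. t + i) ` I) \<inter> {0..}. min (rho L E eta Lab phi2 \<omega> t' l)
        (INF t'' \<in> {t<..<t'}. rho L E eta Lab phi1 \<omega> t'' l))"
| "rho L E eta Lab (Agg op D x c) \<omega> t l =
     (if op = OpSum then ereal ((sum_mset (alpha L E eta Lab D x \<omega> t l) - c)
                                / real (size (alpha L E eta Lab D x \<omega> t l)))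
      else ereal (mop op (alpha L E eta Lab D x \<omega> t l) - c))"
| "rho L E eta Lab (Count op D phi c) \<omega> t l =
     (let R = image_mset (\<lambda>l'. rho L E eta Lab phi \<omega> t l') (mset_set (nbhd L E eta Lab D l))
      in (case op of
            OpMax \<Rightarrow> Max (set_mset R)
          | OpMin \<Rightarrow> Min (set_mset R)
          | OpSum \<Rightarrow> kth_largest (nat \<lfloor>c\<rfloor> + 1) R
          | OpAvg \<Rightarrow> kth_largest (nat \<lfloor>c * real (card (nbhd L E eta Lab D l))\<rfloor> + 1) R))"

end

theory Submission
  imports Defs
begin

text \<open>Call a robustness value r sign-correct for a truth value b if r > 0 forces b and r < 0
  forces \<not> b.  Every robustness operator preserves sign-correctness: negation flips sign and truth
  value, min/max and inf/sup match conjunction/disjunction and the quantifiers of the until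
  operator.  For the counting operators, if the k-th largest robustness value among the neighbours
  is positive then at least k neighbours satisfy the formula, and if it is negative then fewer than
  k do; with k = \<lfloor>c\<rfloor> + 1 this is exactly the threshold test "count > c".\<close>

definition sign_correct :: "ereal \<Rightarrow> bool \<Rightarrow> bool" where
  "sign_correct r b \<longleftrightarrow> (0 < r \<longrightarrow> b) \<and> (r < 0 \<longrightarrow> \<not> b)"

lemma sign_correct_uminus: "sign_correct r b \<Longrightarrow> sign_correct (- r) (\<not> b)"
  by (auto simp: sign_correct_def ereal_uminus_less_reorder ereal_less_uminus_reorder)

lemma sign_correct_min:
  "sign_correct r b \<Longrightarrow> sign_correct s c \<Longrightarrow> sign_correct (min r s) (b \<and> c)"
  by (auto simp: sign_correct_def min_less_iff_disj)

lemma sign_correct_max: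
  "sign_correct r b \<Longrightarrow> sign_correct s c \<Longrightarrow> sign_correct (max r s) (b \<or> c)"
  by (auto simp: sign_correct_def less_max_iff_disj)

lemma sign_correct_INF:
  "(\<And>i. i \<in> A \<Longrightarrow> sign_correct (f i) (P i)) \<Longrightarrow> sign_correct (INF i\<in>A. f i) (\<forall>i\<in>A. P i)"
  unfolding sign_correct_def by (meson INF_less_iff less_INF_D)

lemma sign_correct_SUP:
  "(\<And>i. i \<in> A \<Longrightarrow> sign_correct (f i) (P i)) \<Longrightarrow> sign_correct (SUP i\<in>A. f i) (\<exists>i\<in>A. P i)"
  unfolding sign_correct_def by (meson less_SUP_iff SUP_lessD)

lemma sign_correct_Max:
  assumes "finite A" "A \<noteq> {}" "\<And>i. i \<in> A \<Longrightarrow> sign_correct (f i) (P i)"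
  shows "sign_correct (Max (f ` A)) (\<exists>i\<in>A. P i)"
  using sign_correct_SUP[of A f P] assms by (simp add: cSup_eq_Max)

lemma sign_correct_Min:
  assumes "finite A" "A \<noteq> {}" "\<And>i. i \<in> A \<Longrightarrow> sign_correct (f i) (P i)"
  shows "sign_correct (Min (f ` A)) (\<forall>i\<in>A. P i)"
  using sign_correct_INF[of A f P] assms by (simp add: cInf_eq_Min)

text \<open>kth_largest k R is entry k - 1 of the descending list of R: the first k entries lie above
  it and the last size R - k + 1 entries below it.\<close>

lemma kth_largest_count_bounds:
  assumes "1 \<le> k" "k \<le> size R"
  shows "k \<le> size {#y \<in># R. kth_largest k R \<le> y#}"
    and "size R < k + size {#y \<in># R. y \<le> kth_largest k R#}"
proof -
  define xs where "xs = rev (sorted_list_of_multiset R)"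
  have R: "R = mset xs" and desc: "sorted (rev xs)" unfolding xs_def by simp_all
  have kth: "kth_largest k R = xs ! (k - 1)" unfolding kth_largest_def xs_def ..
  have len: "length xs = size R" using R by simp
  have "mset (take k xs) = {#y \<in># mset (take k xs). xs ! (k - 1) \<le> y#}"
    using desc assms len
    by (auto simp: eq_commute[of "mset _"] filter_mset_eq_conv in_set_conv_nth
        intro!: sorted_rev_nth_mono; linarith)
  also have "\<dots> \<subseteq># {#y \<in># R. xs ! (k - 1) \<le> y#}"
    unfolding R
    by (rule multiset_filter_mono) (metis append_take_drop_id mset_append mset_subset_eq_add_left)
  finally show "k \<le> size {#y \<in># R. kth_largest k R \<le> y#}"
    using size_mset_mono assms len kth by fastforce
  have "mset (drop (k - 1) xs) = {#y \<in># mset (drop (k - 1) xs). y \<le> xs ! (k - 1)#}"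
    using desc assms len
    by (auto simp: eq_commute[of "mset _"] filter_mset_eq_conv in_set_conv_nth
        intro!: sorted_rev_nth_mono; linarith)
  also have "\<dots> \<subseteq># {#y \<in># R. y \<le> xs ! (k - 1)#}"
    unfolding R
    by (rule multiset_filter_mono) (metis append_take_drop_id mset_append mset_subset_eq_add_right)
  finally show "size R < k + size {#y \<in># R. y \<le> kth_largest k R#}"
    using size_mset_mono[of "mset (drop (k - 1) xs)"] assms len kth by fastforce
qed

lemma sign_correct_kth_largest:
  fixes f :: "'a \<Rightarrow> ereal"
  assumes k: "1 \<le> k" "k \<le> size M" and sc: "\<And>x. x \<in># M \<Longrightarrow> sign_correct (f x) (S x)"
  shows "sign_correct (kth_largest k (image_mset f M)) (k \<le> size {#x \<in># M. S x#})"
proof -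
  let ?\<delta> = "kth_largest k (image_mset f M)"
  have k': "1 \<le> k" "k \<le> size (image_mset f M)" using k by simp_all
  have "k \<le> size {#x \<in># M. S x#}" if "0 < ?\<delta>"
  proof -
    have "{#x \<in># M. ?\<delta> \<le> f x#} \<subseteq># {#x \<in># M. S x#}"
      using sc that by (intro filter_mset_mono_strong) (auto simp: sign_correct_def)
    then show ?thesis
      using kth_largest_count_bounds(1)[OF k'] size_mset_mono
      by (fastforce simp: filter_mset_image_mset)
  qed
  moreover have "\<not> k \<le> size {#x \<in># M. S x#}" if "?\<delta> < 0"
  proof -
    have "{#x \<in># M. f x \<le> ?\<delta>#} \<subseteq># {#x \<in># M. \<not> S x#}"
      using sc that by (intro filter_mset_mono_strong) (auto simp: sign_correct_def)
    moreover have "size M = size {#x \<in># M. S x#} + size {#x \<in># M. \<not> S x#}"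
      by (metis multiset_partition size_union)
    ultimately show ?thesis
      using kth_largest_count_bounds(2)[OF k'] size_mset_mono
      by (fastforce simp: filter_mset_image_mset)
  qed
  ultimately show ?thesis unfolding sign_correct_def by blast
qed

lemma sum_mset_indicator:
  "sum_mset (image_mset (\<lambda>x. if S x then 1 else 0) M) = real (size {#x \<in># M. S x#})"
  by (induction M) auto

lemma less_of_nat_iff_nat_floor_less:
  "0 \<le> c \<Longrightarrow> c < real m \<longleftrightarrow> nat \<lfloor>c\<rfloor> < m"
  by linarith

lemma sign_correct_aggregate:
  assumes "M \<noteq> {#}"
  shows "sign_correct
     (if op = OpSum then ereal ((sum_mset M - c) / real (size M)) else ereal (mop op M - c))
     (c < mop op M)"
proof (cases "op = OpSum")
  case True
  then show ?thesis
    using assms by (auto simp: sign_correct_def zero_less_divide_iff divide_less_0_iff)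
qed (simp add: sign_correct_def)

lemma sign_correct_count:
  fixes f :: "'a \<Rightarrow> ereal"
  assumes M: "M \<noteq> {#}" and sc: "\<And>x. x \<in># M \<Longrightarrow> sign_correct (f x) (S x)"
    and c: "0 \<le> c" "if op = OpSum then c < real (size M) else c < 1"
  shows "sign_correct
     (case op of
        OpMax \<Rightarrow> Max (set_mset (image_mset f M))
      | OpMin \<Rightarrow> Min (set_mset (image_mset f M))
      | OpSum \<Rightarrow> kth_largest (nat \<lfloor>c\<rfloor> + 1) (image_mset f M)
      | OpAvg \<Rightarrow> kth_largest (nat \<lfloor>c * real (size M)\<rfloor> + 1) (image_mset f M))
     (c < mop op (image_mset (\<lambda>x. if S x then 1 else 0) M))"
    (is "sign_correct _ (c < mop op ?G)")
proof (cases op)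
  case OpMax
  have "c < Max (set_mset ?G) \<longleftrightarrow> (\<exists>x\<in>#M. S x)"
    using M c OpMax unfolding set_image_mset by (subst Max_gr_iff) auto
  then show ?thesis
    using sign_correct_Max[of "set_mset M" f S] M sc OpMax by simp
next
  case OpMin
  have "c < Min (set_mset ?G) \<longleftrightarrow> (\<forall>x\<in>#M. S x)"
    using M c OpMin unfolding set_image_mset
    by (subst Min_gr_iff) (auto simp del: if_image_distrib)
  then show ?thesis
    using sign_correct_Min[of "set_mset M" f S] M sc OpMin by simp
next
  case OpSum
  have "nat \<lfloor>c\<rfloor> + 1 \<le> size M"
    using c OpSum less_of_nat_iff_nat_floor_less[of c "size M"] by simp
  then show ?thesis
    using sign_correct_kth_largest[of "nat \<lfloor>c\<rfloor> + 1" M f S] sc c OpSum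
    by (simp add: sum_mset_indicator less_of_nat_iff_nat_floor_less Suc_le_eq)
next
  case OpAvg
  have n: "0 < real (size M)" using M by (simp add: nonempty_has_size)
  have cn: "0 \<le> c * real (size M)" using c by simp
  have "c * real (size M) < real (size M)" using c OpAvg n by simp
  then have "nat \<lfloor>c * real (size M)\<rfloor> + 1 \<le> size M"
    using less_of_nat_iff_nat_floor_less[OF cn] by simp
  moreover have "c < mop op ?G \<longleftrightarrow> nat \<lfloor>c * real (size M)\<rfloor> < size {#x \<in># M. S x#}"
    using OpAvg n cn
    by (simp add: sum_mset_indicator pos_less_divide_eq less_of_nat_iff_nat_floor_less)
  ultimately show ?thesis
    using sign_correct_kth_largest[of "nat \<lfloor>c * real (size M)\<rfloor> + 1" M f S] sc OpAvg
    by (simp add: Suc_le_eq)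
qed

lemma nbhd_subset: "nbhd L E eta Lab D l \<subseteq> L"
  unfolding nbhd_def by (auto split: prod.splits)

lemma finite_nbhd: "finite L \<Longrightarrow> finite (nbhd L E eta Lab D l)"
  using nbhd_subset by (rule finite_subset)

lemma sign_correct_rho:
  fixes phi :: "('x, 'p) sastl"
  assumes "finite L"
  shows "wf L E eta Lab phi \<Longrightarrow> 0 \<le> t \<Longrightarrow> l \<in> L \<Longrightarrow>
    sign_correct (rho L E eta Lab phi \<omega> t l) (sat L E eta Lab phi \<omega> t l)"
proof (induction phi arbitrary: t l)
  case (Gt x c)
  then show ?case by (simp add: sign_correct_def)
next
  case (Neg phi)
  then show ?case by (simp add: sign_correct_uminus)
next
  case (And phi1 phi2)
  then show ?case by (simp add: sign_correct_min)
next
  case (Or phi1 phi2)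
  then show ?case by (simp add: sign_correct_max)
next
  case (Until I phi1 phi2)
  then show ?case
    by (simp only: rho.simps sat.simps, intro sign_correct_SUP sign_correct_min sign_correct_INF) auto
next
  case (Agg op D x c)
  let ?N = "nbhd L E eta Lab D l"
  have "finite ?N" "?N \<noteq> {}"
    using finite_nbhd[OF \<open>finite L\<close>] Agg.prems by simp_all
  then have "alpha L E eta Lab D x \<omega> t l \<noteq> {#}"
    by (simp add: alpha_def mset_set_empty_iff)
  then show ?case unfolding rho.simps sat.simps by (rule sign_correct_aggregate)
next
  case (Count op D phi c)
  let ?N = "nbhd L E eta Lab D l"
  have N: "finite ?N" "?N \<noteq> {}"
    using finite_nbhd[OF \<open>finite L\<close>] Count.prems by simp_all
  then have M: "mset_set ?N \<noteq> {#}" by (simp add: mset_set_empty_iff)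
  have c: "0 \<le> c" "if op = OpSum then c < real (size (mset_set ?N)) else c < 1"
    using Count.prems by (auto split: if_splits)
  have IH: "sign_correct (rho L E eta Lab phi \<omega> t l') (sat L E eta Lab phi \<omega> t l')"
    if "l' \<in># mset_set ?N" for l'
    using Count.IH[of t l'] Count.prems nbhd_subset[of L E eta Lab D l] that N(1) by auto
  from sign_correct_count[where f = "rho L E eta Lab phi \<omega> t"
      and S = "sat L E eta Lab phi \<omega> t", OF M IH c]
  show ?case
    unfolding size_mset_set by (simp add: Let_def)
qed

theorem theorem1:
  fixes L :: "'l set" and E :: "'l set set" and eta :: "'l set \<Rightarrow> real"
    and Lab :: "'l \<Rightarrow> 'p set"
    and phi :: "('x::finite, 'p) sastl" and \<omega> :: "real \<Rightarrow> 'l \<Rightarrow> 'x \<Rightarrow> real"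
    and t :: real and l :: 'l
  assumes "finite L" and "L \<noteq> {}"
    and "\<forall>e\<in>E. \<exists>a\<in>L. \<exists>b\<in>L. e = {a, b}"
    and "\<forall>e\<in>E. 0 \<le> eta e"
    and "wf L E eta Lab phi"
    and "0 \<le> t" and "l \<in> L"
  shows "(rho L E eta Lab phi \<omega> t l > 0 \<longrightarrow> sat L E eta Lab phi \<omega> t l) \<and>
         (rho L E eta Lab phi \<omega> t l < 0 \<longrightarrow> \<not> sat L E eta Lab phi \<omega> t l)"
  using sign_correct_rho[OF assms(1,5-7)] unfolding sign_correct_def .

end
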